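(* Let $n\ge 4$ and let $W$ be a euclidean metric Lie $n$-algebra, written as an orthogonal direct sum of ideals $W=\mathfrak{a}\oplus\mathfrak{s}^{(n)}_1\oplus\dots\oplus\mathfrak{s}^{(n)}_q$, where $\mathfrak{a}$ is abelian and each $\mathfrak{s}^{(n)}_i$ is a copy of the simple euclidean Lie $n$-algebra $\mathfrak{s}^{(n)}$. Suppose $W$ additionally carries an alternating $(n-1)$-linear bracket $[x_1,\dots,x_{n-1}]$ making it a Lie $(n-1)$-algebra, such that for every $x_1,\dots,x_{n-2}\in W$ the adjoint map $\mathrm{ad}_{x_1,\dots,x_{n-2}}:y\mapsto[x_1,\dots,x_{n-2},y]$ is skew-symmetric with respect to the inner product of $W$ and is a derivation of the $n$-bracket of $W$. Then each $\mathrm{ad}_{x_1,\dots,x_{n-2}}$ preserves each of the summands $\mathfrak{a},\mathfrak{s}^{(n)}_1,\dots,\mathfrak{s}^{(n)}_q$; consequently each of these summands is an ideal of the Lie $(n-1)$-algebra $(W,[\cdot,\dots,\cdot])$.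
   Context: All vector spaces are real and finite-dimensional. For $k\ge 2$, a Lie $k$-algebra is a vector space with an alternating $k$-linear bracket such that each $\mathrm{ad}_{x_1,\dots,x_{k-1}}:y\mapsto[x_1,\dots,x_{k-1},y]$ is a derivation of the bracket; an ideal is a subspace $I$ with $[I,W,\dots,W]\subset I$; it is abelian if all brackets vanish. A metric Lie $k$-algebra has a nondegenerate symmetric bilinear form for which all $\mathrm{ad}$ maps are skew-symmetric; euclidean means the form is positive definite. For $k\ge 3$, $\mathfrak{s}^{(k)}$ denotes the $(k+1)$-dimensional Lie $k$-algebra with basis $\boldsymbol e_1,\dots,\boldsymbol e_{k+1}$ and bracket $[\boldsymbol e_1,\dots,\widehat{\boldsymbol e_i},\dots,\boldsymbol e_{k+1}]=(-1)^i\boldsymbol e_i$ (hat denotes omission), with an inner product making this basis orthogonal with all $\langle\boldsymbol e_i,\boldsymbol e_i\rangle$ equal to the same positive number. *)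

theory Defs
  imports "HOL-Analysis.Analysis"
begin

text \<open>A k-ary bracket on a finite-dimensional real inner product space 'v is modelled as a
function on lists; only its values on lists of length k matter.\<close>

definition multilinear_br :: "nat \<Rightarrow> ('v::real_vector list \<Rightarrow> 'v) \<Rightarrow> bool" where
  "multilinear_br k br \<longleftrightarrow>
     (\<forall>xs i. length xs = k \<longrightarrow> i < k \<longrightarrow> linear (\<lambda>y. br (xs[i := y])))"

definition alternating_br :: "nat \<Rightarrow> ('v::real_vector list \<Rightarrow> 'v) \<Rightarrow> bool" where
  "alternating_br k br \<longleftrightarrow>
     (\<forall>xs i j. length xs = k \<longrightarrow> i < k \<longrightarrow> j < k \<longrightarrow> i \<noteq> j \<longrightarrow> xs ! i = xs ! j \<longrightarrow> br xs = 0)"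

definition ad_br :: "('v list \<Rightarrow> 'v) \<Rightarrow> 'v list \<Rightarrow> 'v \<Rightarrow> 'v" where
  "ad_br br xs = (\<lambda>y. br (xs @ [y]))"

definition derivation_br :: "nat \<Rightarrow> ('v::real_vector list \<Rightarrow> 'v) \<Rightarrow> ('v \<Rightarrow> 'v) \<Rightarrow> bool" where
  "derivation_br k br D \<longleftrightarrow>
     (\<forall>ys. length ys = k \<longrightarrow> D (br ys) = (\<Sum>i<k. br (ys[i := D (ys ! i)])))"

definition lie_k_algebra :: "nat \<Rightarrow> ('v::real_vector list \<Rightarrow> 'v) \<Rightarrow> bool" where
  "lie_k_algebra k br \<longleftrightarrow> 2 \<le> k \<and> multilinear_br k br \<and> alternating_br k br \<and>
     (\<forall>xs. length xs = k - 1 \<longrightarrow> derivation_br k br (ad_br br xs))"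

definition skew_map :: "('v::real_inner \<Rightarrow> 'v) \<Rightarrow> bool" where
  "skew_map D \<longleftrightarrow> (\<forall>y z. inner (D y) z = - inner y (D z))"

definition euclidean_metric_lie_k_algebra :: "nat \<Rightarrow> ('v::euclidean_space list \<Rightarrow> 'v) \<Rightarrow> bool" where
  "euclidean_metric_lie_k_algebra k br \<longleftrightarrow> lie_k_algebra k br \<and>
     (\<forall>xs. length xs = k - 1 \<longrightarrow> skew_map (ad_br br xs))"

definition ideal_br :: "nat \<Rightarrow> ('v::real_vector list \<Rightarrow> 'v) \<Rightarrow> 'v set \<Rightarrow> bool" where
  "ideal_br k br I \<longleftrightarrow> subspace I \<and>
     (\<forall>x ys. x \<in> I \<longrightarrow> length ys = k - 1 \<longrightarrow> br (x # ys) \<in> I)"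

definition abelian_ideal_br :: "nat \<Rightarrow> ('v::real_vector list \<Rightarrow> 'v) \<Rightarrow> 'v set \<Rightarrow> bool" where
  "abelian_ideal_br k br I \<longleftrightarrow> ideal_br k br I \<and>
     (\<forall>xs. length xs = k \<longrightarrow> set xs \<subseteq> I \<longrightarrow> br xs = 0)"

definition copy_of_s :: "nat \<Rightarrow> ('v::euclidean_space list \<Rightarrow> 'v) \<Rightarrow> 'v set \<Rightarrow> bool" where
  "copy_of_s n br S \<longleftrightarrow>
     (\<exists>(e :: nat \<Rightarrow> 'v) (c :: real). c > 0 \<and>
        e ` {1..n+1} \<subseteq> S \<and> span (e ` {1..n+1}) = S \<and>
        (\<forall>i\<in>{1..n+1}. \<forall>j\<in>{1..n+1}. i \<noteq> j \<longrightarrow> inner (e i) (e j) = 0) \<and>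
        (\<forall>i\<in>{1..n+1}. inner (e i) (e i) = c) \<and>
        (\<forall>i\<in>{1..n+1}. br (map e (filter (\<lambda>j. j \<noteq> i) [1..<n+2])) = (-1) ^ i *\<^sub>R e i))"

end

theory Submission
  imports Defs
begin

text \<open>
  Proof idea.  Fix x_1..x_{n-2} and write D for the adjoint map ad_{x_1..x_{n-2}} of the
  (n-1)-bracket; D is linear, skew-symmetric and a derivation of the n-bracket.

  (1) Each summand s = s^(n)_i is perfect: every basis vector e_k is, up to sign, the
      n-bracket of the other n basis vectors.  A derivation maps an n-bracket of elements
      of an ideal S into S (each term of the Leibniz sum keeps an untouched slot in S),
      so D maps the basis of S, hence S itself, into S.
  (2) D is skew, so it preserves the orthogonal complement of every D-invariant subspace;
      thus D maps A into the vectors orthogonal to all S_i, and the orthogonal direct sum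
      decomposition shows that these vectors lie in A.
  (3) For an alternating multilinear bracket, a subspace invariant under all adjoint maps
      is an ideal, since any slot can be moved to the last one at the cost of a sign.
\<close>

lemma br_swap:
  assumes ml: "multilinear_br k br" and al: "alternating_br k br" and len: "length xs = k"
    and ij: "i < k" "j < k" "i \<noteq> j"
  shows "br (xs[i:=u, j:=v]) = - br (xs[i:=v, j:=u])"
proof -
  define h where "h u v = br (xs[i:=u, j:=v])" for u v
  have lin1: "linear (\<lambda>u. h u v)" for v
  proof -
    have "linear (\<lambda>u. br ((xs[j:=v])[i:=u]))" using ml len ij unfolding multilinear_br_def by simp
    moreover have "(xs[j:=v])[i:=u] = xs[i:=u,j:=v]" for u using ij by (simp add: list_update_swap)
    ultimately show ?thesis unfolding h_def by simp
  qed
  have lin2: "linear (\<lambda>v. h u v)" for u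
    using ml len ij unfolding multilinear_br_def h_def by simp
  have diag: "h w w = 0" for w
  proof -
    have "(xs[i:=w,j:=w]) ! i = w" "(xs[i:=w,j:=w]) ! j = w" "length (xs[i:=w,j:=w]) = k"
      using len ij by auto
    then show ?thesis using al ij unfolding alternating_br_def h_def by metis
  qed
  have "0 = h (u+v) (u+v)" using diag by simp
  also have "\<dots> = h u u + h u v + (h v u + h v v)"
    using linear_add[OF lin1, of u v "u+v"] linear_add[OF lin2, of u u v] linear_add[OF lin2, of v u v]
    by simp
  finally have "h u v = - h v u" using diag by (simp add: eq_neg_iff_add_eq_0 add.commute)
  then show ?thesis unfolding h_def .
qed

lemma br_exchange:
  assumes ml: "multilinear_br k br" and al: "alternating_br k br" and len: "length l = k"
    and ij: "i < k" "j < k" "i \<noteq> j"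
  shows "br l = - br (l[i := l!j, j := l!i])"
  using br_swap[OF ml al len ij, of "l!i" "l!j"] by simp

lemma ideal_absorbs_any_slot:
  assumes ml: "multilinear_br k br" and al: "alternating_br k br" and I: "ideal_br k br I"
    and len: "length l = k" and p: "p < k" and lp: "l ! p \<in> I"
  shows "br l \<in> I"
proof -
  have first_slot: "br m \<in> I" if m: "length m = k" "m ! 0 \<in> I" "0 < k" for m
  proof -
    obtain x ys where "m = x # ys" using m by (cases m) auto
    then show ?thesis using I m unfolding ideal_br_def by auto
  qed
  show ?thesis
  proof (cases "p = 0")
    case True then show ?thesis using first_slot len lp p by simp
  next
    case False
    have "br l = - br (l[0 := l!p, p := l!0])" using br_exchange[OF ml al len, of 0 p] p False by simp
    moreover have "br (l[0 := l!p, p := l!0]) \<in> I"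
      using first_slot[of "l[0 := l!p, p := l!0]"] len p False lp by simp
    ultimately show ?thesis using I subspace_neg unfolding ideal_br_def by fastforce
  qed
qed

lemma ad_br_linear:
  assumes ml: "multilinear_br k br" and k: "1 \<le> k" and len: "length xs = k - 1"
  shows "linear (ad_br br xs)"
proof -
  have "linear (\<lambda>y. br ((xs @ [0])[k-1 := y]))"
    using ml len k unfolding multilinear_br_def by simp
  moreover have "(xs @ [0])[k-1 := y] = xs @ [y]" for y using len by (simp add: list_update_append)
  ultimately show ?thesis unfolding ad_br_def by simp
qed

lemma ideal_if_ad_invariant:
  assumes ml: "multilinear_br k br" and al: "alternating_br k br" and k: "2 \<le> k"
    and subI: "subspace I" and inv: "\<And>xs. length xs = k - 1 \<Longrightarrow> ad_br br xs ` I \<subseteq> I"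
  shows "ideal_br k br I"
  unfolding ideal_br_def
proof (intro conjI subI allI impI)
  fix x and ys :: "'a list" assume x: "x \<in> I" and len: "length ys = k - 1"
  define l where "l = x # ys"
  define l' where "l' = l[0 := l ! (k-1), k-1 := x]"
  have lenl: "length l = k" using len k unfolding l_def by simp
  then have lenl': "length l' = k" unfolding l'_def by simp
  have "br l = - br l'"
    using br_exchange[OF ml al lenl, of 0 "k-1"] k unfolding l'_def l_def by simp
  moreover have "l' = take (k-1) l' @ [x]"
  proof -
    have "l' = take (k-1) l' @ [l' ! (k-1)]"
      using lenl' k take_Suc_conv_app_nth[of "k-1" l'] by simp
    moreover have "l' ! (k-1) = x" using lenl k unfolding l'_def by simp
    ultimately show ?thesis by simp
  qed
  then have "br l' = ad_br br (take (k-1) l') x" unfolding ad_br_def by metis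
  moreover have "ad_br br (take (k-1) l') x \<in> I" using inv[of "take (k-1) l'"] lenl' x by auto
  ultimately show "br (x # ys) \<in> I" using subI subspace_neg unfolding l_def by fastforce
qed

text \<open>A derivation maps a bracket of elements of an ideal back into that ideal: in each
  term of the Leibniz sum some untouched slot still lies in the ideal.\<close>

lemma derivation_bracket_in_ideal:
  assumes ml: "multilinear_br k br" and al: "alternating_br k br" and I: "ideal_br k br I"
    and k: "2 \<le> k" and der: "derivation_br k br D"
    and len: "length L = k" and LI: "set L \<subseteq> I"
  shows "D (br L) \<in> I"
proof -
  have "D (br L) = (\<Sum>p<k. br (L[p := D (L ! p)]))" using der len unfolding derivation_br_def by simp
  also have "\<dots> \<in> I"
  proof (rule subspace_sum)
    show "subspace I" using I unfolding ideal_br_def by simp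
  next
    fix p assume p: "p \<in> {..<k}"
    define p' :: nat where "p' = (if p = 0 then 1 else 0)"
    have p': "p' < k" "p' \<noteq> p" using k unfolding p'_def by auto
    have "L[p := D (L ! p)] ! p' \<in> I" using p' len LI nth_mem by fastforce
    then show "br (L[p := D (L ! p)]) \<in> I"
      using ideal_absorbs_any_slot[OF ml al I, of "L[p := D (L ! p)]" p'] len p' by simp
  qed
  finally show ?thesis .
qed

lemma length_omit_one:
  assumes "k \<in> {1..n+1}"
  shows "length (filter (\<lambda>j. j \<noteq> k) [1..<n+2]) = n"
proof -
  have "length (filter (\<lambda>j. j \<noteq> k) [1..<n+2]) = card ({1..n+1} - {k})"
  proof -
    have "set (filter (\<lambda>j. j \<noteq> k) [1..<n+2]) = {1..n+1} - {k}" by auto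
    then show ?thesis by (metis distinct_card distinct_filter distinct_upt)
  qed
  also have "\<dots> = n" using assms by simp
  finally show ?thesis .
qed

lemma derivation_preserves_copy_of_s:
  assumes ml: "multilinear_br n br" and al: "alternating_br n br" and n: "2 \<le> n"
    and I: "ideal_br n br S" and copy: "copy_of_s n br S"
    and lin: "linear D" and der: "derivation_br n br D"
  shows "D ` S \<subseteq> S"
proof -
  have subS: "subspace S" using I unfolding ideal_br_def by simp
  obtain e :: "nat \<Rightarrow> 'a" and c where
    eS: "e ` {1..n+1} \<subseteq> S" and sp: "span (e ` {1..n+1}) = S" and
    brk: "\<forall>k\<in>{1..n+1}. br (map e (filter (\<lambda>j. j \<noteq> k) [1..<n+2])) = (-1) ^ k *\<^sub>R e k"
    using copy unfolding copy_of_s_def by blast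
  have De: "D (e k) \<in> S" if k: "k \<in> {1..n+1}" for k
  proof -
    define L where "L = map e (filter (\<lambda>j. j \<noteq> k) [1..<n+2])"
    have "length L = n" using length_omit_one[OF k] unfolding L_def by simp
    moreover have "set L \<subseteq> S" unfolding L_def using eS by auto
    ultimately have "D (br L) \<in> S" using derivation_bracket_in_ideal[OF ml al I n der] by blast
    then have "(-1) ^ k *\<^sub>R D (br L) \<in> S" using subspace_scale[OF subS] by simp
    moreover have "e k = (-1) ^ k *\<^sub>R br L"
    proof -
      have "(-1) ^ k *\<^sub>R br L = ((-1) ^ k * (-1) ^ k) *\<^sub>R e k"
        using brk k unfolding L_def by simp
      also have "(-1::real) ^ k * (-1) ^ k = 1" by (simp flip: power_add)
      finally show ?thesis by simp
    qed
    ultimately show ?thesis using linear_cmul[OF lin] by simp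
  qed
  have "D ` S = span (D ` e ` {1..n+1})" using sp linear_span_image[OF lin] by simp
  also have "\<dots> \<subseteq> S" using De subS by (intro span_minimal) auto
  finally show ?thesis .
qed

lemma skew_preserves_orthogonal:
  assumes "skew_map D" and "D ` S \<subseteq> S" and "\<And>s. s \<in> S \<Longrightarrow> inner a s = 0" and "s \<in> S"
  shows "inner (D a) s = 0"
  using assms unfolding skew_map_def by fastforce

lemma orthogonal_to_summands_in_A:
  fixes A :: "'a::real_inner set" and q :: nat
  assumes orth_AS: "\<And>i x y. i < q \<Longrightarrow> x \<in> A \<Longrightarrow> y \<in> S i \<Longrightarrow> inner x y = 0"
    and orth_SS: "\<And>i j x y. i < q \<Longrightarrow> j < q \<Longrightarrow> i \<noteq> j \<Longrightarrow> x \<in> S i \<Longrightarrow> y \<in> S j \<Longrightarrow> inner x y = 0"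
    and spanning: "\<And>w. \<exists>a\<in>A. \<exists>s. (\<forall>i<q. s i \<in> S i) \<and> w = a + (\<Sum>i<q. s i)"
    and perp: "\<And>i s. i < q \<Longrightarrow> s \<in> S i \<Longrightarrow> inner y s = 0"
  shows "y \<in> A"
proof -
  obtain a s where a: "a \<in> A" and s: "\<forall>i<q. s i \<in> S i" and dec: "y = a + (\<Sum>i<q. s i)"
    using spanning[of y] by blast
  have "s i = 0" if i: "i < q" for i
  proof -
    have "inner (s j) (s i) = 0" if "j \<in> {..<q} - {i}" for j
      using that i s orth_SS by blast
    then have "(\<Sum>j<q. inner (s j) (s i)) = (\<Sum>j\<in>{i}. inner (s j) (s i))"
      using i by (intro sum.mono_neutral_right) auto
    then have "inner y (s i) = inner (s i) (s i)"
      using orth_AS[OF i a] s i unfolding dec by (simp add: inner_add_left inner_sum_left)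
    then show ?thesis using perp[OF i] s i by simp
  qed
  then show ?thesis using dec a by simp
qed

theorem lemma3p0:
  fixes n q :: nat
    and br :: "'v::euclidean_space list \<Rightarrow> 'v"
    and br' :: "'v list \<Rightarrow> 'v"
    and A :: "'v set"
    and S :: "nat \<Rightarrow> 'v set"
  assumes n: "n \<ge> 4"
    and W: "euclidean_metric_lie_k_algebra n br"
    and A_ideal: "abelian_ideal_br n br A"
    and S_ideal: "\<And>i. i < q \<Longrightarrow> ideal_br n br (S i)"
    and S_copy: "\<And>i. i < q \<Longrightarrow> copy_of_s n br (S i)"
    and orth_AS: "\<And>i x y. i < q \<Longrightarrow> x \<in> A \<Longrightarrow> y \<in> S i \<Longrightarrow> inner x y = 0"
    and orth_SS: "\<And>i j x y. i < q \<Longrightarrow> j < q \<Longrightarrow> i \<noteq> j \<Longrightarrow> x \<in> S i \<Longrightarrow> y \<in> S j \<Longrightarrow> inner x y = 0"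
    and spanning: "\<And>w. \<exists>a\<in>A. \<exists>s. (\<forall>i<q. s i \<in> S i) \<and> w = a + (\<Sum>i<q. s i)"
    and W': "lie_k_algebra (n - 1) br'"
    and skew': "\<And>xs. length xs = n - 2 \<Longrightarrow> skew_map (ad_br br' xs)"
    and deriv': "\<And>xs. length xs = n - 2 \<Longrightarrow> derivation_br n br (ad_br br' xs)"
  shows "(\<forall>xs. length xs = n - 2 \<longrightarrow>
            ad_br br' xs ` A \<subseteq> A \<and> (\<forall>i<q. ad_br br' xs ` S i \<subseteq> S i))
         \<and> ideal_br (n - 1) br' A \<and> (\<forall>i<q. ideal_br (n - 1) br' (S i))"
proof -
  have ml: "multilinear_br n br" and al: "alternating_br n br"
    using W unfolding euclidean_metric_lie_k_algebra_def lie_k_algebra_def by auto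
  have ml': "multilinear_br (n-1) br'" and al': "alternating_br (n-1) br'"
    using W' unfolding lie_k_algebra_def by auto
  have DS: "ad_br br' xs ` S i \<subseteq> S i" if len: "length xs = n - 2" and i: "i < q" for xs i
    using derivation_preserves_copy_of_s[OF ml al _ S_ideal[OF i] S_copy[OF i]
        ad_br_linear[OF ml'] deriv'[OF len]] len n by simp
  have DA: "ad_br br' xs ` A \<subseteq> A" if len: "length xs = n - 2" for xs
  proof (rule image_subsetI)
    fix a assume a: "a \<in> A"
    have perp: "inner (ad_br br' xs a) s = 0" if i: "i < q" and s: "s \<in> S i" for i s
      using skew_preserves_orthogonal[OF skew'[OF len] DS[OF len i] _ s] orth_AS[OF i a] by blast
    show "ad_br br' xs a \<in> A"
      by (rule orthogonal_to_summands_in_A[where A = A and S = S and q = q])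
        (fact orth_AS orth_SS spanning perp)+
  qed
  have "n - 1 \<ge> 2" and "n - 1 - 1 = n - 2" using n by auto
  moreover have "subspace A" using A_ideal unfolding abelian_ideal_br_def ideal_br_def by simp
  moreover have "subspace (S i)" if "i < q" for i using S_ideal[OF that] unfolding ideal_br_def by simp
  ultimately show ?thesis
    using DA DS ideal_if_ad_invariant[OF ml' al'] by simp
qed

end
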